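(* Let $L>0$, $K>0$ and let $p\in C^{0,1}([0,L],\mathbb{R}^d)$ be the arc length parametrisation of an (open) polygon with vertices $p(a_0),\dots,p(a_n)$, $0=a_0<a_1<\dots<a_n=L$, such that $\mathrm{maxCurv}_2(p)\le K$ and $KL\le\pi$. Let $\eta:[0,L]\to\mathbb{R}^d$ be the arc length parametrisation of (an arc of) a circle of curvature $K$. Then $$|\eta(L)-\eta(0)|<|p(L)-p(0)|.$$
   Context: For an open polygon $p$ with vertices $y_k=p(a_k)$, the discrete curvature at an interior vertex $y_k$ ($1\le k\le n-1$) is $\kappa_{d,2}(y_{k-1},y_k,y_{k+1})=\frac{\phi_k}{(|y_{k-1}-y_k|+|y_{k+1}-y_k|)/2}$, where $\phi_k=\measuredangle(y_k-y_{k-1},y_{k+1}-y_k)\in[0,\pi]$ is the exterior angle at $y_k$; $\mathrm{maxCurv}_2(p)$ is the maximum of $\kappa_{d,2}$ over all interior vertices (and $0$ if there are none). *)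

theory Defs
  imports "HOL-Analysis.Analysis"
begin

definition vec_angle :: "'a::euclidean_space \<Rightarrow> 'a \<Rightarrow> real" where
  "vec_angle u v = arccos ((u \<bullet> v) / (norm u * norm v))"

definition kappa_d2 :: "'a::euclidean_space \<Rightarrow> 'a \<Rightarrow> 'a \<Rightarrow> real" where
  "kappa_d2 x y z = vec_angle (y - x) (z - y) / ((norm (x - y) + norm (z - y)) / 2)"

definition maxCurv2 :: "(nat \<Rightarrow> 'a::euclidean_space) \<Rightarrow> nat \<Rightarrow> real" where
  "maxCurv2 y n = (if n < 2 then 0
     else Max ((\<lambda>k. kappa_d2 (y (k - 1)) (y k) (y (k + 1))) ` {1..n - 1}))"

definition arclength_polygon :: "(real \<Rightarrow> 'a::euclidean_space) \<Rightarrow> (nat \<Rightarrow> real) \<Rightarrow> nat \<Rightarrow> real \<Rightarrow> bool" where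
  "arclength_polygon p a n L \<longleftrightarrow>
     a 0 = 0 \<and> a n = L \<and> (\<forall>k<n. a k < a (Suc k)) \<and>
     (\<forall>k<n. norm (p (a (Suc k)) - p (a k)) = a (Suc k) - a k) \<and>
     (\<forall>k<n. \<forall>t\<in>{a k..a (Suc k)}.
        p t = p (a k) + ((t - a k) / (a (Suc k) - a k)) *\<^sub>R (p (a (Suc k)) - p (a k)))"

definition circle_arc_param :: "real \<Rightarrow> (real \<Rightarrow> 'a::euclidean_space) \<Rightarrow> bool" where
  "circle_arc_param K \<eta> \<longleftrightarrow> (\<exists>c u v. u \<bullet> u = 1 \<and> v \<bullet> v = 1 \<and> u \<bullet> v = 0 \<and>
     (\<forall>s. \<eta> s = c + (1 / K) *\<^sub>R (cos (K * s) *\<^sub>R u + sin (K * s) *\<^sub>R v)))"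

end

theory Submission
  imports Defs
begin

text \<open>Let \<open>t\<^sub>k\<close> be the unit direction of the \<open>k\<close>-th edge and \<open>s\<^sub>k\<close> the arc length at its
  midpoint. The curvature bound says that consecutive directions turn by at most
  \<open>K (s\<^sub>k\<^sub>+\<^sub>1 - s\<^sub>k)\<close>, so by the triangle inequality for angles between unit vectors there is a
  unit vector \<open>m\<close>, the direction ``at arc length \<open>L/2\<close>'', with \<open>\<angle>(t\<^sub>k, m) \<le> K \<bar>s\<^sub>k - L/2\<bar> \<le> \<pi>/2\<close>.
  Projecting onto \<open>m\<close> gives
  \<open>(p L - p 0) \<bullet> m \<ge> \<Sum>\<^sub>k l\<^sub>k cos (K (s\<^sub>k - L/2)) > \<integral>\<^sub>0\<^sup>L cos (K (s - L/2)) ds = 2 sin (KL/2) / K\<close>,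
  where the strict inequality is the midpoint rule for the concave function \<open>cos\<close>
  (\<open>sin (z + h) - sin (z - h) = 2 sin h cos z < 2 h cos z\<close>), and \<open>2 sin (KL/2) / K\<close> is the
  length of the chord of a circle arc of curvature \<open>K\<close> and length \<open>L\<close>.\<close>

lemma lift_Suc_less_le_ivl:
  fixes a :: "nat \<Rightarrow> 'b::order"
  assumes "\<And>k. k < n \<Longrightarrow> a k < a (Suc k)" "i \<le> j" "j \<le> n"
  shows "a i \<le> a j"
  using lift_Suc_mono_le_ivl[of "{..<n}" a i j] assms by force

lemma sin_less_self:
  fixes x :: real
  assumes "0 < x"
  shows "sin x < x"
proof (cases "x \<le> pi")
  case True
  have "0 < sin (x / 2)" using assms True by (intro sin_gt_zero) auto
  moreover have "cos (x / 2) < 1" using cos_monotone_0_pi[of 0 "x / 2"] assms True by auto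
  ultimately have "sin x < 2 * sin (x / 2)" using sin_double[of "x / 2"] by simp
  also have "\<dots> \<le> x" using sin_x_le_x[of "x / 2"] assms by simp
  finally show ?thesis .
next
  case False
  then show ?thesis using sin_le_one[of x] pi_gt3 by linarith
qed

lemma abs_inner_div_norms_le_1:
  fixes u v :: "'a::real_inner"
  shows "\<bar>(u \<bullet> v) / (norm u * norm v)\<bar> \<le> 1"
  using Cauchy_Schwarz_ineq2[of u v]
  by (cases "norm u * norm v = 0") (auto simp: abs_div divide_le_eq_1)

lemma vec_angle_bounds: "0 \<le> vec_angle u v" "vec_angle u v \<le> pi"
  using arccos_bounded abs_inner_div_norms_le_1[of u v]
  unfolding vec_angle_def abs_le_iff by auto

lemma cos_vec_angle: "cos (vec_angle u v) = (u \<bullet> v) / (norm u * norm v)"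
  unfolding vec_angle_def by (rule cos_arccos_abs[OF abs_inner_div_norms_le_1])

lemma vec_angle_commute: "vec_angle u v = vec_angle v u"
  by (simp add: vec_angle_def inner_commute mult.commute)

lemma vec_angle_self: "u \<noteq> 0 \<Longrightarrow> vec_angle u u = 0"
  by (simp add: vec_angle_def dot_square_norm power2_eq_square)

lemma vec_angle_unit: "norm u = 1 \<Longrightarrow> norm v = 1 \<Longrightarrow> vec_angle u v = arccos (u \<bullet> v)"
  by (simp add: vec_angle_def)

lemma vec_angle_sgn: "vec_angle (sgn u) (sgn v) = vec_angle u v"
  by (cases "u = 0"; cases "v = 0") (simp_all add: vec_angle_def norm_sgn sgn_div_norm field_simps)

lemma cos_add_vec_angle_le_inner:
  fixes u v w :: "'a::euclidean_space"
  assumes u: "norm u = 1" and v: "norm v = 1" and w: "norm w = 1"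
  shows "cos (vec_angle u v + vec_angle v w) \<le> u \<bullet> w"
proof -
  define u' where "u' = u - (u \<bullet> v) *\<^sub>R v"
  define w' where "w' = w - (v \<bullet> w) *\<^sub>R v"
  have uu: "u \<bullet> u = 1" and vv: "v \<bullet> v = 1" and ww: "w \<bullet> w = 1"
    using assms by (simp_all add: norm_eq_1)
  have decomp: "u \<bullet> w = (u \<bullet> v) * (v \<bullet> w) + u' \<bullet> w'"
    unfolding u'_def w'_def using vv by (simp add: algebra_simps inner_commute)
  have "(norm u')\<^sup>2 = (sin (vec_angle u v))\<^sup>2"
    unfolding power2_norm_eq_inner u'_def sin_squared_eq cos_vec_angle using u v uu vv
    by (simp add: algebra_simps inner_commute power2_eq_square)
  hence nu': "norm u' = sin (vec_angle u v)"
    by (simp add: power2_eq_iff_nonneg sin_ge_zero vec_angle_bounds)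
  have "(norm w')\<^sup>2 = (sin (vec_angle v w))\<^sup>2"
    unfolding power2_norm_eq_inner w'_def sin_squared_eq cos_vec_angle using v w vv ww
    by (simp add: algebra_simps inner_commute power2_eq_square)
  hence nw': "norm w' = sin (vec_angle v w)"
    by (simp add: power2_eq_iff_nonneg sin_ge_zero vec_angle_bounds)
  have "- (sin (vec_angle u v) * sin (vec_angle v w)) \<le> u' \<bullet> w'"
    using Cauchy_Schwarz_ineq2[of u' w'] nu' nw' by (simp add: abs_le_iff)
  then show ?thesis
    using decomp u v w by (simp add: cos_add cos_vec_angle)
qed

lemma vec_angle_triangle:
  fixes u v w :: "'a::euclidean_space"
  assumes "norm u = 1" "norm v = 1" "norm w = 1"
  shows "vec_angle u w \<le> vec_angle u v + vec_angle v w"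
proof (cases "vec_angle u v + vec_angle v w \<le> pi")
  case True
  have "vec_angle u w = arccos (u \<bullet> w)" using assms by (simp add: vec_angle_unit)
  also have "\<dots> \<le> arccos (cos (vec_angle u v + vec_angle v w))"
    using cos_add_vec_angle_le_inner[OF assms] abs_inner_div_norms_le_1[of u w] assms
    by (intro arccos_le_arccos) (auto simp: abs_le_iff)
  also have "\<dots> = vec_angle u v + vec_angle v w"
    using True by (intro arccos_cos) (simp_all add: add_nonneg_nonneg vec_angle_bounds)
  finally show ?thesis .
next
  case False
  then show ?thesis using vec_angle_bounds(2)[of u w] by linarith
qed

lemma vec_angle_split:
  fixes u w :: "'a::euclidean_space"
  assumes u: "norm u = 1" and w: "norm w = 1" and lt: "vec_angle u w < pi"
    and \<alpha>: "0 \<le> \<alpha>" "\<alpha> \<le> vec_angle u w"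
  obtains m where "norm m = 1" "vec_angle u m = \<alpha>" "vec_angle m w = vec_angle u w - \<alpha>"
proof (cases "\<alpha> = 0")
  case True
  moreover have "u \<noteq> 0" using u by auto
  ultimately show ?thesis using that[of u] u by (simp add: vec_angle_self)
next
  case False
  define \<phi> where "\<phi> = vec_angle u w"
  have cos\<phi>: "cos \<phi> = u \<bullet> w" using u w by (simp add: \<phi>_def cos_vec_angle)
  have sin\<phi>: "0 < sin \<phi>" using False \<alpha> lt by (intro sin_gt_zero) (auto simp: \<phi>_def)
  have uu: "u \<bullet> u = 1" and ww: "w \<bullet> w = 1" using u w by (simp_all add: norm_eq_1)
  \<comment> \<open>the point at angle \<alpha> on the great circle from u to w\<close>
  define m where "m = (sin (\<phi> - \<alpha>) / sin \<phi>) *\<^sub>R u + (sin \<alpha> / sin \<phi>) *\<^sub>R w"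
  have um: "u \<bullet> m = cos \<alpha>"
  proof -
    have "u \<bullet> m = (sin (\<phi> - \<alpha>) + sin \<alpha> * cos \<phi>) / sin \<phi>"
      unfolding m_def using uu cos\<phi> by (simp add: inner_add_right add_divide_distrib)
    also have "\<dots> = cos \<alpha>" using sin\<phi> by (simp add: sin_diff field_simps)
    finally show ?thesis .
  qed
  have mw: "m \<bullet> w = cos (\<phi> - \<alpha>)"
  proof -
    have "m \<bullet> w = (sin (\<phi> - \<alpha>) * cos \<phi> + sin \<alpha>) / sin \<phi>"
      unfolding m_def using ww cos\<phi> by (simp add: inner_add_left add_divide_distrib)
    also have "sin \<alpha> = sin \<phi> * cos (\<phi> - \<alpha>) - cos \<phi> * sin (\<phi> - \<alpha>)"
      using sin_diff[of \<phi> "\<phi> - \<alpha>"] by simp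
    finally show ?thesis using sin\<phi> by (simp add: field_simps)
  qed
  have "m \<bullet> m = (sin (\<phi> - \<alpha>) * (u \<bullet> m) + sin \<alpha> * (w \<bullet> m)) / sin \<phi>"
    by (subst (1) m_def) (simp add: inner_add_left add_divide_distrib)
  also have "\<dots> = (sin (\<phi> - \<alpha>) * cos \<alpha> + cos (\<phi> - \<alpha>) * sin \<alpha>) / sin \<phi>"
    using um mw by (simp add: inner_commute mult.commute)
  also have "\<dots> = 1" using sin_add[of "\<phi> - \<alpha>" \<alpha>] sin\<phi> by simp
  finally have "norm m = 1" by (simp add: norm_eq_1)
  moreover have "vec_angle u m = \<alpha>"
    using u \<open>norm m = 1\<close> um \<alpha> lt by (simp add: vec_angle_unit arccos_cos \<phi>_def)
  moreover have "vec_angle m w = \<phi> - \<alpha>"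
    using w \<open>norm m = 1\<close> mw \<alpha> lt by (simp add: vec_angle_unit arccos_cos \<phi>_def)
  ultimately show ?thesis using that \<phi>_def by simp
qed

lemma cos_le_inner_if_vec_angle_le:
  fixes u v :: "'a::euclidean_space"
  assumes "norm u = 1" "norm v = 1" "vec_angle u v \<le> \<theta>" "\<theta> \<le> pi"
  shows "cos \<theta> \<le> u \<bullet> v"
  using cos_monotone_0_pi_le[of "vec_angle u v" \<theta>] assms
  by (simp add: vec_angle_bounds cos_vec_angle)

lemma exists_crossing_index:
  fixes f :: "nat \<Rightarrow> real"
  assumes "f 0 \<le> c" "c \<le> f N" "0 < N"
  obtains j where "j < N" "f j \<le> c" "c \<le> f (Suc j)"
proof -
  define j where "j = Max {i. i < N \<and> f i \<le> c}"
  have fin: "finite {i. i < N \<and> f i \<le> c}" by simp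
  have "0 \<in> {i. i < N \<and> f i \<le> c}" using assms by simp
  then have "j \<in> {i. i < N \<and> f i \<le> c}"
    unfolding j_def using Max_in[OF fin] by blast
  then have j: "j < N" "f j \<le> c" by simp_all
  have "c \<le> f (Suc j)"
  proof (rule ccontr)
    assume "\<not> c \<le> f (Suc j)"
    then have "Suc j < N" using j assms(2) by (metis Suc_lessI linorder_le_less_linear)
    then have "Suc j \<le> j" using \<open>\<not> c \<le> f (Suc j)\<close> Max_ge[OF fin] unfolding j_def by auto
    then show False by simp
  qed
  then show ?thesis using that j by blast
qed

context
  fixes t :: "nat \<Rightarrow> 'a::euclidean_space" and s :: "nat \<Rightarrow> real" and K :: real and n :: nat
  assumes unit: "\<And>k. k < n \<Longrightarrow> norm (t k) = 1"
    and turn: "\<And>j. Suc j < n \<Longrightarrow> vec_angle (t j) (t (Suc j)) \<le> K * (s (Suc j) - s j)"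
begin

lemma vec_angle_le_turning_bound:
  assumes "i \<le> k" "k < n"
  shows "vec_angle (t i) (t k) \<le> K * (s k - s i)"
  using assms
proof (induction k)
  case 0
  then show ?case using unit[of 0] vec_angle_self[of "t 0"] by force
next
  case (Suc k)
  show ?case
  proof (cases "i = Suc k")
    case True
    then show ?thesis using unit[of i] vec_angle_self[of "t i"] Suc.prems by force
  next
    case False
    then have "i \<le> k" using Suc.prems by simp
    have "vec_angle (t i) (t (Suc k)) \<le> vec_angle (t i) (t k) + vec_angle (t k) (t (Suc k))"
      using Suc.prems \<open>i \<le> k\<close> by (intro vec_angle_triangle unit) auto
    also have "\<dots> \<le> K * (s k - s i) + K * (s (Suc k) - s k)"
      using Suc.IH[OF \<open>i \<le> k\<close>] turn[of k] Suc.prems by (intro add_mono) auto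
    finally show ?thesis by (simp add: algebra_simps)
  qed
qed

lemma vec_angle_le_before:
  assumes "norm m = 1" "i < n" "vec_angle (t i) m \<le> K * (c - s i)" "k \<le> i"
  shows "vec_angle (t k) m \<le> K * (c - s k)"
proof -
  have "vec_angle (t k) m \<le> vec_angle (t k) (t i) + vec_angle (t i) m"
    using assms by (intro vec_angle_triangle unit) auto
  also have "\<dots> \<le> K * (s i - s k) + K * (c - s i)"
    using assms vec_angle_le_turning_bound[of k i] by (intro add_mono) auto
  finally show ?thesis by (simp add: algebra_simps)
qed

lemma vec_angle_le_after:
  assumes "norm m = 1" "vec_angle m (t i) \<le> K * (s i - c)" "i \<le> k" "k < n"
  shows "vec_angle (t k) m \<le> K * (s k - c)"
proof -
  have "vec_angle m (t k) \<le> vec_angle m (t i) + vec_angle (t i) (t k)"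
    using assms by (intro vec_angle_triangle unit) auto
  also have "\<dots> \<le> K * (s i - c) + K * (s k - s i)"
    using assms vec_angle_le_turning_bound[of i k] by (intro add_mono) auto
  finally show ?thesis by (simp add: vec_angle_commute algebra_simps)
qed

lemma exists_unit_vec_angle_le_at_crossing:
  assumes "0 \<le> K" "Suc j < n" "s j \<le> c" "c \<le> s (Suc j)"
    and "vec_angle (t j) (t (Suc j)) < pi"
  obtains m where "norm m = 1" "\<And>k. k < n \<Longrightarrow> vec_angle (t k) m \<le> K * \<bar>s k - c\<bar>"
proof -
  define \<alpha> where "\<alpha> = min (vec_angle (t j) (t (Suc j))) (K * (c - s j))"
  have "0 \<le> \<alpha>" using assms vec_angle_bounds(1) by (simp add: \<alpha>_def)
  moreover have "\<alpha> \<le> vec_angle (t j) (t (Suc j))" by (simp add: \<alpha>_def)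
  ultimately obtain m where m: "norm m = 1" "vec_angle (t j) m = \<alpha>"
      "vec_angle m (t (Suc j)) = vec_angle (t j) (t (Suc j)) - \<alpha>"
    using vec_angle_split[of "t j" "t (Suc j)" \<alpha>] unit assms(2,5) by auto
  have left: "vec_angle (t j) m \<le> K * (c - s j)" using m(2) by (simp add: \<alpha>_def)
  have right: "vec_angle m (t (Suc j)) \<le> K * (s (Suc j) - c)"
  proof -
    have "vec_angle (t j) (t (Suc j)) \<le> K * (s (Suc j) - s j)" using turn assms(2) .
    moreover have "0 \<le> K * (s (Suc j) - c)" using assms by simp
    ultimately show ?thesis
      using m(3) unfolding \<alpha>_def min_def by (simp split: if_split_asm add: algebra_simps)
  qed
  have "vec_angle (t k) m \<le> K * \<bar>s k - c\<bar>" if "k < n" for k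
  proof (cases "k \<le> j")
    case True
    then have "vec_angle (t k) m \<le> K * (c - s k)"
      using vec_angle_le_before[OF m(1) _ left] assms(2) by simp
    also have "\<dots> \<le> K * \<bar>s k - c\<bar>" using \<open>0 \<le> K\<close> by (intro mult_left_mono) auto
    finally show ?thesis .
  next
    case False
    then have "vec_angle (t k) m \<le> K * (s k - c)"
      using vec_angle_le_after[OF m(1) right _ that] by simp
    also have "\<dots> \<le> K * \<bar>s k - c\<bar>" using \<open>0 \<le> K\<close> by (intro mult_left_mono) auto
    finally show ?thesis .
  qed
  then show ?thesis using that m(1) by simp
qed

lemma exists_unit_vec_angle_le:
  assumes "0 \<le> K" "0 < n"
    and turn_less_pi: "\<And>j. Suc j < n \<Longrightarrow> vec_angle (t j) (t (Suc j)) < pi"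
  obtains m where "norm m = 1" "\<And>k. k < n \<Longrightarrow> vec_angle (t k) m \<le> K * \<bar>s k - c\<bar>"
proof -
  have abs_bounds: "K * (c - s k) \<le> K * \<bar>s k - c\<bar>" "K * (s k - c) \<le> K * \<bar>s k - c\<bar>" for k
    using \<open>0 \<le> K\<close> by (intro mult_left_mono; simp)+
  have first: "norm (t 0) = 1" and last: "norm (t (n - 1)) = 1" using unit \<open>0 < n\<close> by simp_all
  consider "c \<le> s 0" | "s (n - 1) \<le> c" | "s 0 < c" "c < s (n - 1)" by linarith
  then show ?thesis
  proof cases
    case 1
    then have "vec_angle (t 0) (t 0) \<le> K * (s 0 - c)"
      using first vec_angle_self[of "t 0"] \<open>0 \<le> K\<close> by force
    then have "vec_angle (t k) (t 0) \<le> K * \<bar>s k - c\<bar>" if "k < n" for k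
      using vec_angle_le_after[OF first _ _ that, of 0 c] abs_bounds(2)[of k] by simp
    then show ?thesis using that first by simp
  next
    case 2
    then have self: "vec_angle (t (n - 1)) (t (n - 1)) \<le> K * (c - s (n - 1))"
      using last vec_angle_self[of "t (n - 1)"] \<open>0 \<le> K\<close> by force
    have "vec_angle (t k) (t (n - 1)) \<le> K * \<bar>s k - c\<bar>" if "k < n" for k
    proof -
      have "k \<le> n - 1" using that by linarith
      then have "vec_angle (t k) (t (n - 1)) \<le> K * (c - s k)"
        using vec_angle_le_before[OF last _ self] \<open>0 < n\<close> by simp
      then show ?thesis using abs_bounds(1)[of k] by linarith
    qed
    then show ?thesis using that last by simp
  next
    case 3
    then have "n - 1 \<noteq> 0" "s 0 \<le> c" "c \<le> s (n - 1)" by auto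
    then obtain j where j: "j < n - 1" "s j \<le> c" "c \<le> s (Suc j)"
      using exists_crossing_index[of s c "n - 1"] by blast
    then have "Suc j < n" by linarith
    then show ?thesis
      using exists_unit_vec_angle_le_at_crossing[OF \<open>0 \<le> K\<close> _ j(2,3) turn_less_pi] that by blast
  qed
qed

end

lemma sin_add_minus_sin_diff_less:
  fixes z h :: real
  assumes "0 < h" "\<bar>z\<bar> < pi / 2"
  shows "sin (z + h) - sin (z - h) < 2 * h * cos z"
proof -
  have "0 < cos z" using assms(2) by (intro cos_gt_zero_pi) (auto simp: abs_less_iff)
  then have "2 * cos z * sin h < 2 * cos z * h" using sin_less_self[OF assms(1)] by simp
  then show ?thesis by (simp add: sin_add sin_diff algebra_simps)
qed

lemma chord_less_midpoint_cos_sum: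
  fixes a :: "nat \<Rightarrow> real"
  assumes "0 < K" "K * L \<le> pi" "a 0 = 0" "a n = L" "0 < n"
    and inc: "\<And>k. k < n \<Longrightarrow> a k < a (Suc k)"
  shows "2 * sin (K * L / 2) / K
    < (\<Sum>k<n. (a (Suc k) - a k) * cos (K * ((a k + a (Suc k)) / 2 - L / 2)))"
proof -
  have term_less: "sin (K * (a (Suc k) - L / 2)) - sin (K * (a k - L / 2))
      < K * ((a (Suc k) - a k) * cos (K * ((a k + a (Suc k)) / 2 - L / 2)))" if "k < n" for k
  proof -
    have "0 \<le> a k" "a (Suc k) \<le> L" using lift_Suc_less_le_ivl[of n a 0 k, OF inc] lift_Suc_less_le_ivl[of n a "Suc k" n, OF inc] assms that by auto
    then have "\<bar>(a k + a (Suc k)) / 2 - L / 2\<bar> < L / 2"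
      using inc[OF that] unfolding abs_less_iff by (simp add: field_simps)
    define z where "z = K * ((a k + a (Suc k)) / 2 - L / 2)"
    define h where "h = K * (a (Suc k) - a k) / 2"
    have "\<bar>z\<bar> = K * \<bar>(a k + a (Suc k)) / 2 - L / 2\<bar>" using \<open>0 < K\<close> by (simp add: z_def abs_mult)
    also have "\<dots> < K * (L / 2)"
      using \<open>\<bar>(a k + a (Suc k)) / 2 - L / 2\<bar> < L / 2\<close> \<open>0 < K\<close> by (rule mult_strict_left_mono)
    also have "\<dots> \<le> pi / 2" using \<open>K * L \<le> pi\<close> by simp
    finally have "\<bar>z\<bar> < pi / 2" .
    moreover have "0 < h" using inc[OF that] \<open>0 < K\<close> by (simp add: h_def)
    ultimately have "sin (z + h) - sin (z - h) < 2 * h * cos z"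
      by (intro sin_add_minus_sin_diff_less)
    moreover have "z + h = K * (a (Suc k) - L / 2)" "z - h = K * (a k - L / 2)"
      by (simp_all add: z_def h_def algebra_simps add_divide_distrib diff_divide_distrib)
    ultimately show ?thesis by (simp add: z_def h_def)
  qed
  have "2 * sin (K * L / 2) = (\<Sum>k<n. sin (K * (a (Suc k) - L / 2)) - sin (K * (a k - L / 2)))"
    using sum_lessThan_telescope[of "\<lambda>k. sin (K * (a k - L / 2))" n] assms(3,4)
    by (simp add: algebra_simps)
  also have "\<dots> < (\<Sum>k<n. K * ((a (Suc k) - a k) * cos (K * ((a k + a (Suc k)) / 2 - L / 2))))"
    using term_less \<open>0 < n\<close> by (intro sum_strict_mono) auto
  finally show ?thesis using \<open>0 < K\<close> by (simp add: sum_distrib_left[symmetric] pos_divide_less_eq mult.commute)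
qed

lemma circle_arc_chord:
  assumes "circle_arc_param K \<eta>" "0 < K"
  shows "norm (\<eta> s - \<eta> 0) = 2 * \<bar>sin (K * s / 2)\<bar> / K"
proof -
  obtain c u v where uv: "u \<bullet> u = 1" "v \<bullet> v = 1" "u \<bullet> v = 0"
    and \<eta>: "\<And>s. \<eta> s = c + (1 / K) *\<^sub>R (cos (K * s) *\<^sub>R u + sin (K * s) *\<^sub>R v)"
    using assms(1) unfolding circle_arc_param_def by blast
  have diff: "\<eta> s - \<eta> 0 = (1 / K) *\<^sub>R ((cos (K * s) - 1) *\<^sub>R u + sin (K * s) *\<^sub>R v)"
    unfolding \<eta> by (simp add: algebra_simps)
  have "(norm (\<eta> s - \<eta> 0))\<^sup>2 = (1 / K)\<^sup>2 * (2 - 2 * cos (K * s))"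
    unfolding power2_norm_eq_inner diff using uv
    by (simp add: inner_add_left inner_add_right inner_commute power2_eq_square algebra_simps)
      (simp add: add_divide_distrib[symmetric] sin_cos_squared_add3)
  also have "2 - 2 * cos (K * s) = (2 * sin (K * s / 2))\<^sup>2"
    using cos_double_sin[of "K * s / 2"] by (simp add: power2_eq_square)
  finally have "(norm (\<eta> s - \<eta> 0))\<^sup>2 = (2 * \<bar>sin (K * s / 2)\<bar> / K)\<^sup>2"
    by (simp add: power_divide power_mult_distrib)
  then show ?thesis using \<open>0 < K\<close> by (simp add: power2_eq_iff_nonneg)
qed

lemma vec_angle_le_if_kappa_d2_le:
  assumes "kappa_d2 x y z \<le> K" "x \<noteq> y"
  shows "vec_angle (y - x) (z - y) \<le> K * ((norm (y - x) + norm (z - y)) / 2)"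
proof -
  have "0 < (norm (x - y) + norm (z - y)) / 2" using assms(2) by (simp add: add_pos_nonneg)
  then show ?thesis
    using assms(1) unfolding kappa_d2_def by (simp add: pos_divide_le_eq norm_minus_commute mult.commute)
qed

lemma kappa_d2_le_maxCurv2:
  assumes "0 < k" "k < n"
  shows "kappa_d2 (y (k - 1)) (y k) (y (k + 1)) \<le> maxCurv2 y n"
  using assms unfolding maxCurv2_def by (auto intro!: Max_ge)

lemma polygon_exists_unit_vec_angle_le:
  fixes y :: "nat \<Rightarrow> 'a::euclidean_space" and a :: "nat \<Rightarrow> real"
  assumes "0 < K" "K * L \<le> pi" "a 0 = 0" "a n = L" "0 < n"
    and inc: "\<And>k. k < n \<Longrightarrow> a k < a (Suc k)"
    and edge: "\<And>k. k < n \<Longrightarrow> norm (y (Suc k) - y k) = a (Suc k) - a k"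
    and curv: "\<And>j. Suc j < n \<Longrightarrow> kappa_d2 (y j) (y (Suc j)) (y (Suc (Suc j))) \<le> K"
  obtains m where "norm m = 1"
    "\<And>k. k < n \<Longrightarrow> vec_angle (sgn (y (Suc k) - y k)) m \<le> K * \<bar>(a k + a (Suc k)) / 2 - L / 2\<bar>"
proof -
  define t where "t k = sgn (y (Suc k) - y k)" for k
  define s where "s k = (a k + a (Suc k)) / 2" for k
  have nonzero: "y (Suc k) - y k \<noteq> 0" if "k < n" for k
    using edge[OF that] inc[OF that] by auto
  have unit: "norm (t k) = 1" if "k < n" for k
    using nonzero[OF that] by (simp add: t_def norm_sgn)
  have turn: "vec_angle (t j) (t (Suc j)) \<le> K * (s (Suc j) - s j)" if "Suc j < n" for j
  proof -
    have "vec_angle (t j) (t (Suc j)) = vec_angle (y (Suc j) - y j) (y (Suc (Suc j)) - y (Suc j))"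
      by (simp add: t_def vec_angle_sgn)
    also have "\<dots> \<le> K * ((norm (y (Suc j) - y j) + norm (y (Suc (Suc j)) - y (Suc j))) / 2)"
      using curv[OF that] nonzero[of j] that by (intro vec_angle_le_if_kappa_d2_le) auto
    also have "\<dots> = K * (s (Suc j) - s j)"
      using that by (simp add: edge Suc_lessD s_def field_simps)
    finally show ?thesis .
  qed
  have turn_less_pi: "vec_angle (t j) (t (Suc j)) < pi" if "Suc j < n" for j
  proof -
    have "0 \<le> a j" "a (Suc (Suc j)) \<le> L"
      using lift_Suc_less_le_ivl[of n a 0 j, OF inc] lift_Suc_less_le_ivl[of n a "Suc (Suc j)" n, OF inc] that assms(3,4) by auto
    then have "K * (s (Suc j) - s j) \<le> K * (L / 2)"
      using \<open>0 < K\<close> by (intro mult_left_mono) (auto simp: s_def field_simps)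
    then show ?thesis using turn[OF that] \<open>K * L \<le> pi\<close> pi_gt_zero by linarith
  qed
  show ?thesis
    using exists_unit_vec_angle_le[of n t K s, OF unit turn _ \<open>0 < n\<close> turn_less_pi] \<open>0 < K\<close> that
    unfolding t_def s_def by auto
qed

lemma polygon_chord_greater:
  fixes y :: "nat \<Rightarrow> 'a::euclidean_space" and a :: "nat \<Rightarrow> real"
  assumes "0 < K" "K * L \<le> pi" "a 0 = 0" "a n = L" "0 < n"
    and inc: "\<And>k. k < n \<Longrightarrow> a k < a (Suc k)"
    and edge: "\<And>k. k < n \<Longrightarrow> norm (y (Suc k) - y k) = a (Suc k) - a k"
    and curv: "\<And>j. Suc j < n \<Longrightarrow> kappa_d2 (y j) (y (Suc j)) (y (Suc (Suc j))) \<le> K"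
  shows "2 * sin (K * L / 2) / K < norm (y n - y 0)"
proof -
  define s where "s k = (a k + a (Suc k)) / 2" for k
  obtain m where m: "norm m = 1"
    "\<And>k. k < n \<Longrightarrow> vec_angle (sgn (y (Suc k) - y k)) m \<le> K * \<bar>s k - L / 2\<bar>"
    using polygon_exists_unit_vec_angle_le[OF assms] unfolding s_def by blast
  have proj: "(a (Suc k) - a k) * cos (K * (s k - L / 2)) \<le> (y (Suc k) - y k) \<bullet> m" if "k < n" for k
  proof -
    have "0 \<le> a k" "a (Suc k) \<le> L"
      using lift_Suc_less_le_ivl[of n a 0 k, OF inc] lift_Suc_less_le_ivl[of n a "Suc k" n, OF inc] that assms(3,4) by auto
    then have "\<bar>s k - L / 2\<bar> \<le> L / 2"
      using inc[OF that] unfolding s_def abs_le_iff by (simp add: field_simps)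
    then have "K * \<bar>s k - L / 2\<bar> \<le> K * (L / 2)"
      using \<open>0 < K\<close> by (intro mult_left_mono) auto
    then have "K * \<bar>s k - L / 2\<bar> \<le> pi" using \<open>K * L \<le> pi\<close> pi_gt_zero by linarith
    moreover have "norm (sgn (y (Suc k) - y k)) = 1"
      using edge[OF that] inc[OF that] by (auto simp: norm_sgn)
    ultimately have "cos (K * \<bar>s k - L / 2\<bar>) \<le> sgn (y (Suc k) - y k) \<bullet> m"
      by (intro cos_le_inner_if_vec_angle_le m that)
    moreover have "cos (K * \<bar>s k - L / 2\<bar>) = cos (K * (s k - L / 2))"
      using \<open>0 < K\<close> by (metis abs_mult abs_of_pos cos_abs_real)
    moreover have "(y (Suc k) - y k) \<bullet> m = (a (Suc k) - a k) * (sgn (y (Suc k) - y k) \<bullet> m)"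
      using edge[OF that] inc[OF that] by (simp add: sgn_div_norm)
    ultimately show ?thesis
      using inc[OF that] by (simp add: mult_left_mono)
  qed
  have "2 * sin (K * L / 2) / K < (\<Sum>k<n. (a (Suc k) - a k) * cos (K * (s k - L / 2)))"
    unfolding s_def using assms(1-5) inc by (rule chord_less_midpoint_cos_sum)
  also have "\<dots> \<le> (\<Sum>k<n. (y (Suc k) - y k) \<bullet> m)"
    using proj by (intro sum_mono) auto
  also have "\<dots> = (y n - y 0) \<bullet> m"
    by (simp add: inner_sum_left[symmetric] sum_lessThan_telescope)
  also have "\<dots> \<le> norm (y n - y 0)"
    using norm_cauchy_schwarz[of "y n - y 0" m] m(1) by simp
  finally show ?thesis .
qed

theorem proposition6:
  fixes p \<eta> :: "real \<Rightarrow> 'a::euclidean_space" and a :: "nat \<Rightarrow> real"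
    and n :: nat and L K :: real
  assumes "L > 0" and "K > 0"
    and "arclength_polygon p a n L"
    and "maxCurv2 (\<lambda>k. p (a k)) n \<le> K"
    and "K * L \<le> pi"
    and "circle_arc_param K \<eta>"
  shows "norm (\<eta> L - \<eta> 0) < norm (p L - p 0)"
proof -
  have a: "a 0 = 0" "a n = L" "\<And>k. k < n \<Longrightarrow> a k < a (Suc k)"
    and edge: "\<And>k. k < n \<Longrightarrow> norm (p (a (Suc k)) - p (a k)) = a (Suc k) - a k"
    using assms(3) unfolding arclength_polygon_def by auto
  have "0 < n" using a(1,2) \<open>L > 0\<close> by (cases n) auto
  have curv: "kappa_d2 (p (a j)) (p (a (Suc j))) (p (a (Suc (Suc j)))) \<le> K" if "Suc j < n" for j
    using kappa_d2_le_maxCurv2[of "Suc j" n "\<lambda>k. p (a k)"] assms(4) that by simp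
  have "0 \<le> sin (K * L / 2)"
    using mult_pos_pos[OF \<open>K > 0\<close> \<open>L > 0\<close>] \<open>K * L \<le> pi\<close> pi_gt_zero
    by (intro sin_ge_zero) linarith+
  then have "norm (\<eta> L - \<eta> 0) = 2 * sin (K * L / 2) / K"
    using circle_arc_chord[OF assms(6) \<open>K > 0\<close>, of L] by simp
  also have "\<dots> < norm (p (a n) - p (a 0))"
    using \<open>K > 0\<close> \<open>K * L \<le> pi\<close> a(1,2) \<open>0 < n\<close> a(3) edge curv
    by (rule polygon_chord_greater[where y = "\<lambda>k. p (a k)"])
  finally show ?thesis using a(1,2) by simp
qed

end
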